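(* Let $V$ be a set and $\mathcal{E}, \mathcal{F}$ families of subsets of $V$. Then $\langle V,\mathcal{E},\mathcal{F}\rangle$ has Property S if and only if $\langle V,[\mathcal{E}]_{\mathcal{F}},\mathcal{F}\rangle$ has Property S.
   Context: A transversal for a family is a set that intersects every member of the family. The triple $\langle V,\mathcal{E},\mathcal{F}\rangle$ has Property S if there exists $X \subseteq V$ such that $X$ is a transversal for $\mathcal{E}$ and $V\setminus X$ is a transversal for $\mathcal{F}$. Resolution: for subsets $c_1,\dots,c_n, d, e$ of $V$, $e$ follows from $c_1,\dots,c_n$ by resolution on $d$ if $d = \{v_1,\dots,v_n\}$ with $v_i \in c_i$ for $1\le i\le n$ and $e = \bigcup_{i=1}^n (c_i \setminus \{v_i\})$. For families $\mathcal{A}, \mathcal{D}$ of subsets of $V$, $[\mathcal{A}]_{\mathcal{D}}$ denotes the closure of $\mathcal{A}$ under resolution on members of $\mathcal{D}$: the smallest family containing $\mathcal{A}$ such that whenever $c_1,\dots,c_n$ are in the family and $e$ follows from $c_1,\dots,c_n$ by resolution on some $d \in \mathcal{D}$, then $e$ is in the family. *)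

theory Defs
  imports Main
begin

definition transversal :: "'a set \<Rightarrow> 'a set set \<Rightarrow> bool" where
  "transversal X \<F> \<longleftrightarrow> (\<forall>f\<in>\<F>. X \<inter> f \<noteq> {})"

definition property_S :: "'a set \<Rightarrow> 'a set set \<Rightarrow> 'a set set \<Rightarrow> bool" where
  "property_S V \<E> \<F> \<longleftrightarrow> (\<exists>X. X \<subseteq> V \<and> transversal X \<E> \<and> transversal (V - X) \<F>)"

text \<open>e follows from c_0,...,c_{n-1} by resolution on d\<close>
definition resolvent :: "nat \<Rightarrow> (nat \<Rightarrow> 'a set) \<Rightarrow> 'a set \<Rightarrow> 'a set \<Rightarrow> bool" where
  "resolvent n c d e \<longleftrightarrow>
     (\<exists>v. (\<forall>i<n. v i \<in> c i) \<and> d = v ` {..<n} \<and> e = (\<Union>i<n. c i - {v i}))"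

inductive_set res_closure :: "'a set set \<Rightarrow> 'a set set \<Rightarrow> 'a set set"
  for \<A> :: "'a set set" and \<D> :: "'a set set" where
  base: "a \<in> \<A> \<Longrightarrow> a \<in> res_closure \<A> \<D>"
| step: "\<lbrakk>d \<in> \<D>; \<forall>i<n. c i \<in> res_closure \<A> \<D>; resolvent n c d e\<rbrakk>
          \<Longrightarrow> e \<in> res_closure \<A> \<D>"

end

theory Submission
  imports Defs
begin

(* If X meets every member of E and a set Y disjoint from X meets every member of F, then X
   meets every resolvent on some d in F: Y contains a pivot v_i of d, and the point where X meets
   the premise c_i differs from v_i, so it survives into the resolvent. By induction X is a
   transversal of the whole closure; the converse holds because the closure contains E. *)

lemma transversal_subset: "transversal X \<B> \<Longrightarrow> \<A> \<subseteq> \<B> \<Longrightarrow> transversal X \<A>"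
  unfolding transversal_def by blast

lemma subset_res_closure: "\<A> \<subseteq> res_closure \<A> \<D>"
  by (auto intro: res_closure.base)

lemma transversal_resolvent:
  assumes res: "resolvent n c d e"
    and c: "\<forall>i<n. X \<inter> c i \<noteq> {}"
    and d: "Y \<inter> d \<noteq> {}"
    and disj: "X \<inter> Y = {}"
  shows "X \<inter> e \<noteq> {}"
proof -
  from res obtain v where v: "\<forall>i<n. v i \<in> c i" "d = v ` {..<n}" "e = (\<Union>i<n. c i - {v i})"
    unfolding resolvent_def by blast
  from d v(2) obtain i where i: "i < n" "v i \<in> Y" by auto
  from c i(1) obtain x where x: "x \<in> X" "x \<in> c i" by auto
  have "x \<noteq> v i" using x(1) i(2) disj by auto
  then have "x \<in> e" using v(3) x(2) i(1) by auto
  with x(1) show ?thesis by auto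
qed

lemma transversal_res_closure:
  assumes "transversal X \<A>" and "transversal Y \<D>" and "X \<inter> Y = {}"
  shows "transversal X (res_closure \<A> \<D>)"
  unfolding transversal_def
proof
  fix e assume "e \<in> res_closure \<A> \<D>"
  then show "X \<inter> e \<noteq> {}"
  proof (induction rule: res_closure.induct)
    case (base a)
    then show ?case using assms(1) unfolding transversal_def by blast
  next
    case (step d n c e)
    have "Y \<inter> d \<noteq> {}" using assms(2) \<open>d \<in> \<D>\<close> unfolding transversal_def by blast
    moreover have "\<forall>i<n. X \<inter> c i \<noteq> {}" using step.IH by blast
    ultimately show ?case using \<open>resolvent n c d e\<close> assms(3) by (simp add: transversal_resolvent)
  qed
qed

theorem theorem7:
  fixes V :: "'a set" and \<E> \<F> :: "'a set set"
  assumes "\<forall>e\<in>\<E>. e \<subseteq> V" and "\<forall>f\<in>\<F>. f \<subseteq> V"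
  shows "property_S V \<E> \<F> \<longleftrightarrow> property_S V (res_closure \<E> \<F>) \<F>"
proof
  assume "property_S V \<E> \<F>"
  then obtain X where "X \<subseteq> V" "transversal X \<E>" "transversal (V - X) \<F>"
    unfolding property_S_def by blast
  moreover have "transversal X (res_closure \<E> \<F>)"
    using calculation by (intro transversal_res_closure) auto
  ultimately show "property_S V (res_closure \<E> \<F>) \<F>"
    unfolding property_S_def by blast
next
  assume "property_S V (res_closure \<E> \<F>) \<F>"
  then show "property_S V \<E> \<F>"
    unfolding property_S_def using transversal_subset[OF _ subset_res_closure] by blast
qed

end
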